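(* Let $\kappa>2$. Then the solution $t\mapsto e^{i\kappa t/2}\frac{1}{\sqrt2}(1,1)$ of system (H) is spectrally unstable and orbitally unstable.
   Context: Let $\kappa>0$. System (H) is the ODE system for $u=(u_0,u_1):\mathbb R\to\mathbb C^2$: $i u_0'=u_0-u_1-\kappa|u_0|^2u_0$, $\; i u_1'=u_1-u_0-\kappa|u_1|^2u_1$. Linearization about a solution $e^{i\omega t}U_*$ with $U_*\in\mathbb R^2$: writing $u_j=e^{i\omega t}(U_{*j}+v_j)$ and keeping linear terms gives $i v_j'=(1+\omega-\kappa U_{*j}^2)v_j-v_{1-j}-2\kappa U_{*j}^2\,\mathrm{Re}(v_j)$; with $v_j=q_j+ip_j$ this is $X'=\mathbb LX$ for $X=(q_0,p_0,q_1,p_1)\in\mathbb R^4$, $\mathbb L$ a real $4\times4$ matrix. Spectrally unstable means $\mathbb L$ has an eigenvalue with positive real part. The reference solution is orbitally stable if for every $\epsilon>0$ there is $\delta>0$ such that every solution $u$ of (H) with $|u(0)-U_*|\le\delta$ satisfies $\inf_{\theta\in\mathbb R}|u(t)-e^{i\theta}U_*|\le\epsilon$ for all $t\ge0$; orbitally unstable means not orbitally stable. *)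

theory Defs
  imports "HOL-Analysis.Analysis" "Jordan_Normal_Form.Char_Poly"
begin

text \<open>States are pairs in complex x complex, whose norm is the Euclidean norm on C^2.\<close>

definition H_field :: "real \<Rightarrow> complex \<times> complex \<Rightarrow> complex \<times> complex" where
  "H_field \<kappa> u =
     (- \<i> * (fst u - snd u - complex_of_real (\<kappa> * (cmod (fst u))\<^sup>2) * fst u),
      - \<i> * (snd u - fst u - complex_of_real (\<kappa> * (cmod (snd u))\<^sup>2) * snd u))"

definition H_solution :: "real \<Rightarrow> (real \<Rightarrow> complex \<times> complex) \<Rightarrow> bool" where
  "H_solution \<kappa> u \<longleftrightarrow> (\<forall>t. (u has_vector_derivative H_field \<kappa> (u t)) (at t))"

text \<open>Linearization matrix about e^{i omega t} (U0,U1), U real, in coordinates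
  X = (q0,p0,q1,p1), v_j = q_j + i p_j.\<close>

definition lin_matrix :: "real \<Rightarrow> real \<Rightarrow> real \<Rightarrow> real \<Rightarrow> real mat" where
  "lin_matrix \<kappa> \<omega> U0 U1 =
    (let a0 = 1 + \<omega> - \<kappa> * U0\<^sup>2; a1 = 1 + \<omega> - \<kappa> * U1\<^sup>2 in
     mat_of_rows_list 4
      [[0, a0, 0, -1],
       [-(a0 - 2 * \<kappa> * U0\<^sup>2), 0, 1, 0],
       [0, -1, 0, a1],
       [1, 0, -(a1 - 2 * \<kappa> * U1\<^sup>2), 0]])"

definition spectrally_unstable :: "real mat \<Rightarrow> bool" where
  "spectrally_unstable L \<longleftrightarrow>
     (\<exists>z::complex. Re z > 0 \<and> eigenvalue (map_mat complex_of_real L) z)"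

definition orbitally_stable :: "real \<Rightarrow> complex \<times> complex \<Rightarrow> bool" where
  "orbitally_stable \<kappa> U \<longleftrightarrow>
     (\<forall>\<epsilon>>0. \<exists>\<delta>>0. \<forall>u. H_solution \<kappa> u \<and> norm (u 0 - U) \<le> \<delta> \<longrightarrow>
        (\<forall>t\<ge>0. (INF \<theta>::real. norm (u t - (cis \<theta> * fst U, cis \<theta> * snd U))) \<le> \<epsilon>))"

end

theory Submission
  imports Defs
begin

text \<open>The linearization at the standing wave has the positive eigenvalue \<open>l = sqrt (2 \<kappa> - 4)\<close>
  with an explicit real eigenvector. For orbital instability write \<open>\<kappa> = (l\<^sup>2 + 4) / 2\<close>: then (H) has
  the explicit solutions \<open>u(t) = exp (i \<kappa> t / 2) (\<phi> w, \<phi> (-w)) / sqrt 2\<close> with \<open>w = a exp (l t)\<close>,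
  where \<open>\<phi> z = (1 + D z) / (1 - i z)\<close> and \<open>D = (2 + i l) / (l + 2 i)\<close> is unimodular; they are
  homoclinic to the standing-wave orbit. As \<open>a \<rightarrow> 0\<close> the initial value tends to the standing wave,
  yet at the time where \<open>w = 1\<close> the first component has modulus
  \<open>|\<phi> 1| / sqrt 2 = (l + 2) / sqrt (2 (l\<^sup>2 + 4))\<close>, exceeding \<open>1 / sqrt 2\<close> by a margin independent of \<open>a\<close>.\<close>

lemma lin_matrix_carrier: "lin_matrix \<kappa> \<omega> U0 U1 \<in> carrier_mat 4 4"
  by (simp add: lin_matrix_def mat_of_rows_list_def carrier_matI)

lemma spectrally_unstableI:
  assumes "L \<in> carrier_mat n n" and "eigenvalue L \<mu>" and "\<mu> > 0"
  shows "spectrally_unstable L"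
  unfolding spectrally_unstable_def
  using of_real_hom.eigenvalue_hom[OF assms(1,2)] assms(3) by force

lemma lin_matrix_standing_wave:
  "lin_matrix \<kappa> (\<kappa> / 2) (1 / sqrt 2) (1 / sqrt 2) =
     mat_of_rows_list 4 [[0, 1, 0, -1], [\<kappa> - 1, 0, 1, 0], [0, -1, 0, 1], [1, 0, \<kappa> - 1, 0]]"
  by (simp add: lin_matrix_def power_divide)

lemma standing_wave_eigenvector:
  fixes \<kappa> l :: real
  assumes "l\<^sup>2 = 2 * \<kappa> - 4"
  shows "eigenvector (lin_matrix \<kappa> (\<kappa> / 2) (1 / sqrt 2) (1 / sqrt 2)) (vec_of_list [2, l, -2, -l]) l"
proof -
  let ?M = "mat_of_rows_list 4 [[0, 1, 0, -1], [\<kappa> - 1, 0, 1, 0], [0, -1, 0, 1], [1, 0, \<kappa> - 1, 0]]"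
  let ?v = "vec_of_list [2, l, -2, -l]"
  have dim: "dim_row ?M = 4" "?v \<in> carrier_vec 4"
    by (simp_all add: mat_of_rows_list_def carrier_vecI numeral_eq_Suc)
  have "?M *\<^sub>v ?v = l \<cdot>\<^sub>v ?v"
  proof (rule eq_vecI)
    fix i assume "i < dim_vec (l \<cdot>\<^sub>v ?v)"
    then have "i \<in> {0, 1, 2, 3}" by auto
    then show "(?M *\<^sub>v ?v) $ i = (l \<cdot>\<^sub>v ?v) $ i"
      using assms
      by (auto simp: mat_of_rows_list_def scalar_prod_def vec_of_list_index row_def
          eval_nat_numeral power2_eq_square algebra_simps)
  qed (simp add: mat_of_rows_list_def)
  moreover have "?v \<noteq> 0\<^sub>v 4"
    by (metis nth_Cons_0 vec_of_list_index zero_less_numeral index_zero_vec(1) zero_neq_numeral)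
  ultimately show ?thesis
    unfolding eigenvector_def lin_matrix_standing_wave dim(1) using dim(2) by blast
qed

definition homoclinic_profile :: "real \<Rightarrow> complex \<Rightarrow> complex" where
  "homoclinic_profile l z = ((l + 2 * \<i>) + (2 + \<i> * l) * z) / ((l + 2 * \<i>) * (1 - \<i> * z))"

definition homoclinic_profile_deriv :: "real \<Rightarrow> complex \<Rightarrow> complex" where
  "homoclinic_profile_deriv l z = 2 * \<i> * l / ((l + 2 * \<i>) * (1 - \<i> * z)\<^sup>2)"

lemma of_real_plus_2i_nonzero: "complex_of_real l + 2 * \<i> \<noteq> 0"
  by (simp add: complex_eq_iff)

lemma one_plus_i_of_real_nonzero: "1 + \<i> * complex_of_real w \<noteq> 0"
  by (simp add: complex_eq_iff)

lemma one_minus_i_of_real_nonzero: "1 - \<i> * complex_of_real w \<noteq> 0"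
  by (simp add: complex_eq_iff)

lemma homoclinic_profile_has_field_derivative:
  assumes "1 - \<i> * z \<noteq> 0"
  shows "(homoclinic_profile l has_field_derivative homoclinic_profile_deriv l z) (at z)"
  unfolding homoclinic_profile_def[abs_def] homoclinic_profile_deriv_def
  using assms of_real_plus_2i_nonzero[of l]
  by (auto intro!: derivative_eq_intros simp: divide_simps) (simp add: algebra_simps power2_eq_square)

lemma homoclinic_profile_0: "homoclinic_profile l 0 = 1"
  using of_real_plus_2i_nonzero[of l] by (simp add: homoclinic_profile_def)

lemma norm_homoclinic_profile:
  "(cmod (homoclinic_profile l w))\<^sup>2 = ((l + 2 * w)\<^sup>2 + (2 + l * w)\<^sup>2) / ((l\<^sup>2 + 4) * (1 + w\<^sup>2))"
proof -
  have "homoclinic_profile l w = ((l + 2 * w) + \<i> * (2 + l * w)) / ((l + 2 * \<i>) * (1 - \<i> * w))"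
    unfolding homoclinic_profile_def by (simp add: algebra_simps)
  then show ?thesis
    by (simp add: norm_divide norm_mult cmod_power2 power_divide power_mult_distrib)
qed

lemma homoclinic_profile_equation:
  fixes l w :: real
  shows "\<i> * ((l\<^sup>2 + 4) / 4) * homoclinic_profile l w + l * w * homoclinic_profile_deriv l w
    = - \<i> * (homoclinic_profile l w - homoclinic_profile l (- w)
                - complex_of_real ((l\<^sup>2 + 4) / 4 * (cmod (homoclinic_profile l w))\<^sup>2) * homoclinic_profile l w)"
proof -
  have "4 + 4 * (complex_of_real w)\<^sup>2 = 4 * ((1 - \<i> * w) * (1 + \<i> * w))"
    by (simp add: algebra_simps power2_eq_square)
  then have nz: "4 + 4 * (complex_of_real w)\<^sup>2 \<noteq> 0"
    using one_minus_i_of_real_nonzero one_plus_i_of_real_nonzero by simp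
  have "l\<^sup>2 + 4 \<noteq> 0"
    using zero_le_power2[of l] by linarith
  then have norm_term: "(l\<^sup>2 + 4) / 4 * (cmod (homoclinic_profile l w))\<^sup>2
      = ((l + 2 * w)\<^sup>2 + (2 + l * w)\<^sup>2) / (4 * (1 + w\<^sup>2))"
    unfolding norm_homoclinic_profile by simp
  show ?thesis
    unfolding norm_term unfolding homoclinic_profile_def homoclinic_profile_deriv_def
    by (simp add: divide_simps nz of_real_plus_2i_nonzero one_minus_i_of_real_nonzero one_plus_i_of_real_nonzero)
      (simp add: complex_eq_iff algebra_simps power2_eq_square)
qed

definition homoclinic_component :: "real \<Rightarrow> real \<Rightarrow> real \<Rightarrow> complex" where
  "homoclinic_component l s t =
     exp (\<i> * ((l\<^sup>2 + 4) / 4 * t)) / sqrt 2 * homoclinic_profile l (s * exp (l * t))"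

definition homoclinic :: "real \<Rightarrow> real \<Rightarrow> real \<Rightarrow> complex \<times> complex" where
  "homoclinic l a t = (homoclinic_component l a t, homoclinic_component l (- a) t)"

lemma homoclinic_component_has_vector_derivative:
  fixes l s t :: real
  defines "w \<equiv> s * exp (l * t)"
  shows "(homoclinic_component l s has_vector_derivative
      exp (\<i> * ((l\<^sup>2 + 4) / 4 * t)) / sqrt 2 *
        (\<i> * ((l\<^sup>2 + 4) / 4) * homoclinic_profile l w + l * w * homoclinic_profile_deriv l w)) (at t)"
proof -
  define F where "F z = exp (\<i> * ((l\<^sup>2 + 4) / 4) * z) / sqrt 2 * homoclinic_profile l (s * exp (l * z))"
    for z :: complex
  have w: "complex_of_real w = s * exp (l * complex_of_real t)"
    by (simp add: w_def flip: exp_of_real)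
  have inner: "((\<lambda>z. s * exp (l * z)) has_field_derivative l * w) (at (complex_of_real t))"
    by (auto intro!: derivative_eq_intros simp: w)
  have outer: "(homoclinic_profile l has_field_derivative homoclinic_profile_deriv l w)
      (at (s * exp (l * complex_of_real t)))"
    using homoclinic_profile_has_field_derivative[OF one_minus_i_of_real_nonzero[of w]] unfolding w .
  have "((\<lambda>z. homoclinic_profile l (s * exp (l * z))) has_field_derivative
      homoclinic_profile_deriv l w * (l * w)) (at (complex_of_real t))"
    by (rule DERIV_chain2[OF outer inner])
  then have "(F has_field_derivative
      exp (\<i> * ((l\<^sup>2 + 4) / 4 * t)) / sqrt 2 *
        (\<i> * ((l\<^sup>2 + 4) / 4) * homoclinic_profile l w + l * w * homoclinic_profile_deriv l w))
      (at (complex_of_real t))"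
    unfolding F_def w
    by (auto intro!: derivative_eq_intros simp: field_simps)
  moreover have "(\<lambda>x. F (complex_of_real x)) = homoclinic_component l s"
    by (simp add: fun_eq_iff F_def homoclinic_component_def mult.assoc flip: exp_of_real)
  ultimately show ?thesis
    using has_vector_derivative_real_field by fastforce
qed

lemma H_solution_homoclinic: "H_solution ((l\<^sup>2 + 4) / 2) (homoclinic l a)"
  unfolding H_solution_def
proof
  fix t
  define E where "E = exp (\<i> * ((l\<^sup>2 + 4) / 4 * t)) / sqrt 2"
  define w where "w = a * exp (l * t)"
  have norm_E: "(cmod E)\<^sup>2 = 1 / 2"
    by (simp add: E_def norm_divide power_divide norm_exp_i_times flip: of_real_mult)
  have field: "- \<i> * (E * homoclinic_profile l v - E * homoclinic_profile l (- v)
        - complex_of_real ((l\<^sup>2 + 4) / 2 * (cmod (E * homoclinic_profile l v))\<^sup>2) * (E * homoclinic_profile l v))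
      = E * (\<i> * ((l\<^sup>2 + 4) / 4) * homoclinic_profile l v + l * v * homoclinic_profile_deriv l v)" for v
  proof -
    have "(l\<^sup>2 + 4) / 2 * (cmod (E * homoclinic_profile l v))\<^sup>2
        = (l\<^sup>2 + 4) / 4 * (cmod (homoclinic_profile l v))\<^sup>2"
      by (simp add: norm_mult power_mult_distrib norm_E)
    then show ?thesis
      unfolding homoclinic_profile_equation by (simp only:) (simp add: algebra_simps)
  qed
  have "(homoclinic_component l s has_vector_derivative
      E * (\<i> * ((l\<^sup>2 + 4) / 4) * homoclinic_profile l (s * exp (l * t))
        + l * (s * exp (l * t)) * homoclinic_profile_deriv l (s * exp (l * t)))) (at t)" for s
    unfolding E_def by (rule homoclinic_component_has_vector_derivative)
  from this[of a] this[of "- a"]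
  have "(homoclinic l a has_vector_derivative
      (E * (\<i> * ((l\<^sup>2 + 4) / 4) * homoclinic_profile l w + l * w * homoclinic_profile_deriv l w),
       E * (\<i> * ((l\<^sup>2 + 4) / 4) * homoclinic_profile l (- w) + l * (- w) * homoclinic_profile_deriv l (- w))))
      (at t)"
    unfolding homoclinic_def w_def by (auto intro: has_vector_derivative_Pair)
  moreover have "homoclinic l a t = (E * homoclinic_profile l w, E * homoclinic_profile l (- w))"
    by (simp add: homoclinic_def homoclinic_component_def E_def w_def)
  ultimately show "(homoclinic l a has_vector_derivative H_field ((l\<^sup>2 + 4) / 2) (homoclinic l a t)) (at t)"
    using field[of w] field[of "- w"] by (simp add: H_field_def)
qed

lemma not_orbitally_stableI:
  assumes "\<epsilon> > 0"
    and escape: "\<And>\<delta>. \<delta> > 0 \<Longrightarrow> \<exists>u t. H_solution \<kappa> u \<and> norm (u 0 - U) \<le> \<delta> \<and> t \<ge> 0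
                    \<and> cmod (fst U) + \<epsilon> \<le> cmod (fst (u t))"
  shows "\<not> orbitally_stable \<kappa> U"
proof
  assume "orbitally_stable \<kappa> U"
  then obtain \<delta> where "\<delta> > 0" and stable: "\<And>u. H_solution \<kappa> u \<and> norm (u 0 - U) \<le> \<delta> \<Longrightarrow>
      \<forall>t\<ge>0. (INF \<theta>. norm (u t - (cis \<theta> * fst U, cis \<theta> * snd U))) \<le> \<epsilon> / 2"
    using \<open>\<epsilon> > 0\<close> unfolding orbitally_stable_def by (meson half_gt_zero)
  obtain u t where u: "H_solution \<kappa> u" "norm (u 0 - U) \<le> \<delta>" "t \<ge> 0"
    and far: "cmod (fst U) + \<epsilon> \<le> cmod (fst (u t))"
    using escape[OF \<open>\<delta> > 0\<close>] by blast
  have "\<epsilon> \<le> norm (u t - (cis \<theta> * fst U, cis \<theta> * snd U))" for \<theta>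
  proof -
    have "\<epsilon> \<le> cmod (fst (u t)) - cmod (cis \<theta> * fst U)"
      using far by (simp add: norm_mult)
    also have "\<dots> \<le> cmod (fst (u t) - cis \<theta> * fst U)"
      by (rule norm_triangle_ineq2)
    also have "\<dots> \<le> norm (u t - (cis \<theta> * fst U, cis \<theta> * snd U))"
      by (metis fst_diff fst_conv norm_fst_le prod.collapse)
    finally show ?thesis .
  qed
  then have "\<epsilon> \<le> (INF \<theta>. norm (u t - (cis \<theta> * fst U, cis \<theta> * snd U)))"
    by (intro cINF_greatest) auto
  with stable[OF conjI[OF u(1,2)]] u(3) \<open>\<epsilon> > 0\<close> show False
    by fastforce
qed

lemma homoclinic_at_0:
  "homoclinic l a 0 = (homoclinic_profile l a / sqrt 2, homoclinic_profile l (- a) / sqrt 2)"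
  by (simp add: homoclinic_def homoclinic_component_def)

lemma homoclinic_tendsto_standing_wave:
  "((\<lambda>a. homoclinic l a 0) \<longlongrightarrow> (complex_of_real (1 / sqrt 2), complex_of_real (1 / sqrt 2))) (at 0)"
proof -
  have cont: "isCont (homoclinic_profile l) 0"
    by (rule DERIV_isCont[OF homoclinic_profile_has_field_derivative]) simp
  have "((\<lambda>a. c * complex_of_real a) \<longlongrightarrow> 0) (at 0)" for c
    by (auto intro!: tendsto_eq_intros)
  then have "((\<lambda>a. homoclinic_profile l (c * complex_of_real a)) \<longlongrightarrow> 1) (at 0)" for c
    using isCont_tendsto_compose[OF cont] unfolding homoclinic_profile_0 by blast
  from this[of 1] this[of "- 1"] show ?thesis
    unfolding homoclinic_at_0 by (auto intro!: tendsto_eq_intros)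
qed

lemma norm_homoclinic_profile_1_gt_1:
  assumes "l > 0"
  shows "cmod (homoclinic_profile l 1) > 1"
proof -
  have pos: "(l\<^sup>2 + 4) * (1 + 1\<^sup>2) > 0"
    by (simp add: add_nonneg_pos)
  have "(cmod (homoclinic_profile l 1))\<^sup>2 = ((l + 2 * 1)\<^sup>2 + (2 + l * 1)\<^sup>2) / ((l\<^sup>2 + 4) * (1 + 1\<^sup>2))"
    using norm_homoclinic_profile[of l 1] by simp
  also have "\<dots> > 1"
    using assms pos by (simp only: less_divide_eq_1_pos) (simp add: power2_eq_square algebra_simps)
  finally have "1\<^sup>2 < (cmod (homoclinic_profile l 1))\<^sup>2"
    by simp
  then show ?thesis
    by (rule power_less_imp_less_base) simp
qed

lemma norm_fst_homoclinic:
  "cmod (fst (homoclinic l a t)) = cmod (homoclinic_profile l (a * exp (l * t))) / sqrt 2"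
  by (simp add: homoclinic_def homoclinic_component_def norm_mult norm_divide norm_exp_i_times
      flip: of_real_mult)

lemma homoclinic_not_orbitally_stable:
  assumes "l > 0"
  shows "\<not> orbitally_stable ((l\<^sup>2 + 4) / 2) (complex_of_real (1 / sqrt 2), complex_of_real (1 / sqrt 2))"
    (is "\<not> orbitally_stable _ ?U")
proof (rule not_orbitally_stableI)
  show "(cmod (homoclinic_profile l 1) - 1) / sqrt 2 > 0"
    using norm_homoclinic_profile_1_gt_1[OF assms] by simp
  fix \<delta> :: real
  assume "\<delta> > 0"
  with homoclinic_tendsto_standing_wave[of l]
  have "\<forall>\<^sub>F a in at 0. dist (homoclinic l a 0) ?U < \<delta>"
    by (rule tendstoD)
  then obtain d where "d > 0" and close: "\<And>a. a \<noteq> 0 \<Longrightarrow> dist a 0 < d \<Longrightarrow> dist (homoclinic l a 0) ?U < \<delta>"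
    unfolding eventually_at by auto
  define a where "a = min 1 (d / 2)"
  define t where "t = - ln a / l"
  have "0 < a" "a \<le> 1" "dist a 0 < d"
    using \<open>d > 0\<close> by (auto simp: a_def)
  then have "norm (homoclinic l a 0 - ?U) \<le> \<delta>"
    using close[of a] by (simp add: dist_norm)
  moreover have "t \<ge> 0"
    using \<open>0 < a\<close> \<open>a \<le> 1\<close> assms by (simp add: t_def divide_nonpos_pos)
  moreover have "a * exp (l * t) = 1"
    using \<open>0 < a\<close> assms by (simp add: t_def exp_minus)
  then have "cmod (fst ?U) + (cmod (homoclinic_profile l 1) - 1) / sqrt 2 = cmod (fst (homoclinic l a t))"
    unfolding norm_fst_homoclinic by (simp add: diff_divide_distrib norm_divide)
  ultimately show "\<exists>u t. H_solution ((l\<^sup>2 + 4) / 2) u \<and> norm (u 0 - ?U) \<le> \<delta> \<and> t \<ge> 0 \<and>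
      cmod (fst ?U) + (cmod (homoclinic_profile l 1) - 1) / sqrt 2 \<le> cmod (fst (u t))"
    using H_solution_homoclinic[of l a] by (intro exI[of _ "homoclinic l a"] exI[of _ t]) simp
qed

theorem mainTheorem2:
  fixes \<kappa> :: real
  assumes "\<kappa> > 2"
  shows "spectrally_unstable (lin_matrix \<kappa> (\<kappa> / 2) (1 / sqrt 2) (1 / sqrt 2))
     \<and> \<not> orbitally_stable \<kappa> (complex_of_real (1 / sqrt 2), complex_of_real (1 / sqrt 2))"
proof
  define l where "l = sqrt (2 * \<kappa> - 4)"
  have "l > 0" and l2: "l\<^sup>2 = 2 * \<kappa> - 4"
    using assms by (simp_all add: l_def)
  have "eigenvalue (lin_matrix \<kappa> (\<kappa> / 2) (1 / sqrt 2) (1 / sqrt 2)) l"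
    using standing_wave_eigenvector[OF l2] unfolding eigenvalue_def by blast
  then show "spectrally_unstable (lin_matrix \<kappa> (\<kappa> / 2) (1 / sqrt 2) (1 / sqrt 2))"
    by (rule spectrally_unstableI[OF lin_matrix_carrier _ \<open>l > 0\<close>])
  have "(l\<^sup>2 + 4) / 2 = \<kappa>"
    using l2 by simp
  then show "\<not> orbitally_stable \<kappa> (complex_of_real (1 / sqrt 2), complex_of_real (1 / sqrt 2))"
    using homoclinic_not_orbitally_stable[OF \<open>l > 0\<close>] by simp
qed

end
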